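(* Let $\mathcal S=\{(\alpha_1,\dots,\alpha_6)\in\Sigma:\ \alpha_6=0\}$, regarded as a $5$-dimensional submanifold with coordinates $(\alpha_1,\dots,\alpha_5)$; it is invariant under the action of $I(\mathbb{R}^2_1)$. Provided $I(\mathbb{R}^2_1)$ acts on $\mathcal S$ with three-dimensional orbits, any algebraic $I(\mathbb{R}^2_1)$-invariant $I$ of $\mathcal S$ can be (locally) uniquely expressed as an analytic function $I=F(\mathcal I'_1,\mathcal I'_2)$, where $$\mathcal I'_1=\alpha_4^2-\alpha_5^2,\qquad \mathcal I'_2=2\alpha_3\alpha_4\alpha_5-\alpha_2\alpha_4^2-\alpha_1\alpha_5^2 .$$
   Context: The Minkowski plane $\mathbb{R}^2_1$ has pseudo-Cartesian coordinates $(t,x)$ and metric $dt^2-dx^2$. Every Killing $2$-tensor (symmetric contravariant $2$-tensor $\mathbf K$ with vanishing Schouten bracket $[\mathbf K,\mathbf g]=0$) of $\mathbb{R}^2_1$ has components $K^{tt}=\alpha_1+2\alpha_4x+\alpha_6x^2$, $K^{tx}=K^{xt}=\alpha_3+\alpha_4t+\alpha_5x+\alpha_6tx$, $K^{xx}=\alpha_2+2\alpha_5t+\alpha_6t^2$ for unique constants, identifying the space of such tensors with the parameter space $\Sigma\cong\mathbb{R}^6$. The isometry group $I(\mathbb{R}^2_1)$ (parametrized by $(\phi,a,b)$) acts on $\mathbb{R}^2_1$ by $\tilde t=t\cosh\phi+x\sinh\phi+a$, $\tilde x=t\sinh\phi+x\cosh\phi+b$, and on $\Sigma$ by $\tilde\alpha_1=\alpha_1\cosh^2\phi+2\alpha_3\cosh\phi\sinh\phi+\alpha_2\sinh^2\phi+\alpha_6b^2-2(\alpha_4\cosh\phi+\alpha_5\sinh\phi)b$,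 $\tilde\alpha_2=\alpha_1\sinh^2\phi+2\alpha_3\cosh\phi\sinh\phi+\alpha_2\cosh^2\phi+\alpha_6a^2-2(\alpha_5\cosh\phi+\alpha_4\sinh\phi)a$, $\tilde\alpha_3=\alpha_3(\cosh^2\phi+\sinh^2\phi)+(\alpha_1+\alpha_2)\cosh\phi\sinh\phi-(a\alpha_4+b\alpha_5)\cosh\phi-(a\alpha_5+b\alpha_4)\sinh\phi+\alpha_6ab$, $\tilde\alpha_4=\alpha_4\cosh\phi+\alpha_5\sinh\phi-\alpha_6b$, $\tilde\alpha_5=\alpha_4\sinh\phi+\alpha_5\cosh\phi-\alpha_6a$, $\tilde\alpha_6=\alpha_6$. An $I(\mathbb{R}^2_1)$-invariant of $\mathcal S$ is a smooth function $F$ on (a subset of) $\mathcal S$ with $F(\alpha)=F(\tilde\alpha)$ for all group elements. *)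

theory Defs
  imports "HOL-Analysis.Analysis"
begin

text \<open>Points of the invariant submanifold S = {alpha in Sigma : alpha6 = 0} of the parameter
space of Killing 2-tensors of the Minkowski plane, with coordinates
(alpha1,...,alpha5), are represented as vectors of type real^5 (component i = alpha_i).\<close>

text \<open>Action of the isometry group element (phi,a,b) on S (the given formulas with alpha6 = 0).\<close>
definition act :: "real \<Rightarrow> real \<Rightarrow> real \<Rightarrow> real^5 \<Rightarrow> real^5" where
  "act \<phi> a b \<alpha> = (\<chi> i.
     if i = 1 then \<alpha>$1 * cosh \<phi> ^ 2 + 2 * \<alpha>$3 * cosh \<phi> * sinh \<phi> + \<alpha>$2 * sinh \<phi> ^ 2
                   - 2 * (\<alpha>$4 * cosh \<phi> + \<alpha>$5 * sinh \<phi>) * b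
     else if i = 2 then \<alpha>$1 * sinh \<phi> ^ 2 + 2 * \<alpha>$3 * cosh \<phi> * sinh \<phi> + \<alpha>$2 * cosh \<phi> ^ 2
                   - 2 * (\<alpha>$5 * cosh \<phi> + \<alpha>$4 * sinh \<phi>) * a
     else if i = 3 then \<alpha>$3 * (cosh \<phi> ^ 2 + sinh \<phi> ^ 2) + (\<alpha>$1 + \<alpha>$2) * cosh \<phi> * sinh \<phi>
                   - (a * \<alpha>$4 + b * \<alpha>$5) * cosh \<phi> - (a * \<alpha>$5 + b * \<alpha>$4) * sinh \<phi>
     else if i = 4 then \<alpha>$4 * cosh \<phi> + \<alpha>$5 * sinh \<phi>
     else \<alpha>$4 * sinh \<phi> + \<alpha>$5 * cosh \<phi>)"

definition orbit_dim :: "real^5 \<Rightarrow> nat" where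
  "orbit_dim \<alpha> = (THE n. \<exists>D. ((\<lambda>(g::real \<times> real \<times> real). act (fst g) (fst (snd g)) (snd (snd g)) \<alpha>)
                               has_derivative D) (at (0,0,0)) \<and> n = dim (range D))"

definition is_invariant :: "(real^5 \<Rightarrow> real) \<Rightarrow> bool" where
  "is_invariant I \<longleftrightarrow> (\<forall>\<phi> a b \<alpha>. I (act \<phi> a b \<alpha>) = I \<alpha>)"

inductive poly_fun :: "(real^5 \<Rightarrow> real) \<Rightarrow> bool" where
  const: "poly_fun (\<lambda>_. c)"
| coord: "poly_fun (\<lambda>x. x $ i)"
| add: "poly_fun f \<Longrightarrow> poly_fun g \<Longrightarrow> poly_fun (\<lambda>x. f x + g x)"
| mult: "poly_fun f \<Longrightarrow> poly_fun g \<Longrightarrow> poly_fun (\<lambda>x. f x * g x)"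

definition real_analytic_on2 :: "(real \<times> real \<Rightarrow> real) \<Rightarrow> (real \<times> real) set \<Rightarrow> bool" where
  "real_analytic_on2 F W \<longleftrightarrow>
     (\<forall>w\<in>W. \<exists>r>0. \<exists>c :: nat \<Rightarrow> nat \<Rightarrow> real. \<forall>z\<in>ball w r.
        ((\<lambda>(i,j). c i j * (fst z - fst w) ^ i * (snd z - snd w) ^ j) has_sum F z) UNIV)"

definition inv1 :: "real^5 \<Rightarrow> real" where
  "inv1 \<alpha> = \<alpha>$4 ^ 2 - \<alpha>$5 ^ 2"

definition inv2 :: "real^5 \<Rightarrow> real" where
  "inv2 \<alpha> = 2 * \<alpha>$3 * \<alpha>$4 * \<alpha>$5 - \<alpha>$2 * \<alpha>$4 ^ 2 - \<alpha>$1 * \<alpha>$5 ^ 2"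

end

theory Submission
  imports Defs "HOL-Computational_Algebra.Polynomial"
begin

(* For e = 1 or e = -1, the quantity alpha4 + e alpha5 is a null coordinate: boosts multiply it by
   exp (e phi) and translations fix alpha4, alpha5. In the half-space where alpha4 + e alpha5 has
   the sign of a fixed w \<noteq> 0, a boost therefore moves alpha to alpha4 + e alpha5 = w, which
   together with inv1 determines alpha4 and alpha5; the translations then act transitively on the
   plane of (alpha1, alpha2, alpha3) on which the linear form inv2 is constant. So every orbit in
   the half-space meets the point orbit_rep e w (inv1, inv2), and I = F (inv1, inv2) with
   F = I o orbit_rep, a polynomial in two variables because orbit_rep is affine in the invariants.
   Since (inv1, inv2) o orbit_rep = id, F is unique. A three-dimensional orbit forces
   (alpha4, alpha5) \<noteq> 0, so p lies in such a half-space. *)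

lemma bipoly_has_sum:
  fixes P :: "'a::{comm_ring_1,topological_space} poly poly"
  shows "((\<lambda>(i, j). coeff (coeff P j) i * x ^ i * y ^ j) has_sum poly (poly P [:y:]) x) UNIV"
proof -
  define N where "N = degree P"
  define M where "M = Max ((\<lambda>j. degree (coeff P j)) ` {..N})"
  have deg_le: "degree (coeff P j) \<le> M" for j
    by (cases "j \<le> N") (auto simp: M_def N_def coeff_eq_0)
  have poly_coeff_P: "poly (coeff P j) x = (\<Sum>i\<le>M. coeff (coeff P j) i * x ^ i)" for j
    unfolding poly_altdef
    by (intro sum.mono_neutral_left) (auto simp: coeff_eq_0 deg_le)
  have "poly (poly P [:y:]) x = (\<Sum>j\<le>N. poly (coeff P j) x * y ^ j)"
    by (simp add: poly_altdef[of P] N_def poly_sum poly_monom)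
  also have "\<dots> = (\<Sum>j\<le>N. \<Sum>i\<le>M. coeff (coeff P j) i * x ^ i * y ^ j)"
    by (simp add: poly_coeff_P sum_distrib_right)
  also have "\<dots> = (\<Sum>(i, j)\<in>{..M} \<times> {..N}. coeff (coeff P j) i * x ^ i * y ^ j)"
    by (subst sum.swap) (simp add: sum.cartesian_product)
  finally have sum_eq:
    "poly (poly P [:y:]) x = (\<Sum>(i, j)\<in>{..M} \<times> {..N}. coeff (coeff P j) i * x ^ i * y ^ j)" .
  have vanish: "(\<lambda>(i, j). coeff (coeff P j) i * x ^ i * y ^ j) ij = 0"
    if "ij \<in> UNIV - {..M} \<times> {..N}" for ij
  proof -
    obtain i j where ij: "ij = (i, j)" by fastforce
    show ?thesis
    proof (cases "j \<le> N")
      case True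
      with that ij have "degree (coeff P j) < i" using deg_le[of j] by auto
      then show ?thesis by (simp add: ij coeff_eq_0)
    next
      case False
      then show ?thesis by (simp add: ij N_def coeff_eq_0)
    qed
  qed
  show ?thesis
    by (rule has_sum_finite_neutralI[OF _ _ vanish sum_eq]) auto
qed

lemma poly_fun_affine_plane_eq_bipoly:
  assumes "poly_fun f"
  shows "\<exists>P. \<forall>x y. f (A + x *\<^sub>R B + y *\<^sub>R C) = poly (poly P [:y:]) x"
  using assms
proof induction
  case (const c)
  show ?case by (rule exI[of _ "[:[:c:]:]"]) simp
next
  case (coord i)
  have "(A + x *\<^sub>R B + y *\<^sub>R C) $ i = poly (poly [:[:A $ i, B $ i:], [:C $ i:]:] [:y:]) x" for x y
    by (simp add: algebra_simps)
  then show ?case by blast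
next
  case (add f g)
  then obtain P Q where "\<forall>x y. f (A + x *\<^sub>R B + y *\<^sub>R C) = poly (poly P [:y:]) x"
    and "\<forall>x y. g (A + x *\<^sub>R B + y *\<^sub>R C) = poly (poly Q [:y:]) x" by blast
  then show ?case by (intro exI[of _ "P + Q"]) simp
next
  case (mult f g)
  then obtain P Q where "\<forall>x y. f (A + x *\<^sub>R B + y *\<^sub>R C) = poly (poly P [:y:]) x"
    and "\<forall>x y. g (A + x *\<^sub>R B + y *\<^sub>R C) = poly (poly Q [:y:]) x" by blast
  then show ?case by (intro exI[of _ "P * Q"]) simp
qed

lemma real_analytic_on2_poly_fun_affine_plane:
  assumes "poly_fun f"
  shows "real_analytic_on2 (\<lambda>z. f (A + fst z *\<^sub>R B + snd z *\<^sub>R C)) W"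
  unfolding real_analytic_on2_def
proof
  fix w :: "real \<times> real"
  obtain P where
    P: "\<forall>x y. f ((A + fst w *\<^sub>R B + snd w *\<^sub>R C) + x *\<^sub>R B + y *\<^sub>R C) = poly (poly P [:y:]) x"
    using poly_fun_affine_plane_eq_bipoly[OF assms] by blast
  have eq: "f (A + fst z *\<^sub>R B + snd z *\<^sub>R C) = poly (poly P [:snd z - snd w:]) (fst z - fst w)"
    for z
    using P[rule_format, of "fst z - fst w" "snd z - snd w"] by (simp add: algebra_simps)
  show "\<exists>r>0. \<exists>c. \<forall>z\<in>ball w r. ((\<lambda>(i, j). c i j * (fst z - fst w) ^ i * (snd z - snd w) ^ j)
      has_sum f (A + fst z *\<^sub>R B + snd z *\<^sub>R C)) UNIV"
    by (intro exI[of _ 1] conjI exI[of _ "\<lambda>i j. coeff (coeff P j) i"] ballI)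
       (simp_all add: eq bipoly_has_sum)
qed

lemma exhaust_5:
  fixes x :: 5
  shows "x = 1 \<or> x = 2 \<or> x = 3 \<or> x = 4 \<or> x = 5"
proof (induct x)
  case (of_int z)
  then have "z = 0 \<or> z = 1 \<or> z = 2 \<or> z = 3 \<or> z = 4" by fastforce
  then show ?case by auto
qed

lemma forall_5: "(\<forall>i::5. P i) \<longleftrightarrow> P 1 \<and> P 2 \<and> P 3 \<and> P 4 \<and> P 5"
  by (metis exhaust_5)

lemma act_nth:
  "act \<phi> a b \<alpha> $ 1 = \<alpha>$1 * cosh \<phi> ^ 2 + 2 * \<alpha>$3 * cosh \<phi> * sinh \<phi> + \<alpha>$2 * sinh \<phi> ^ 2
                   - 2 * (\<alpha>$4 * cosh \<phi> + \<alpha>$5 * sinh \<phi>) * b"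
  "act \<phi> a b \<alpha> $ 2 = \<alpha>$1 * sinh \<phi> ^ 2 + 2 * \<alpha>$3 * cosh \<phi> * sinh \<phi> + \<alpha>$2 * cosh \<phi> ^ 2
                   - 2 * (\<alpha>$5 * cosh \<phi> + \<alpha>$4 * sinh \<phi>) * a"
  "act \<phi> a b \<alpha> $ 3 = \<alpha>$3 * (cosh \<phi> ^ 2 + sinh \<phi> ^ 2) + (\<alpha>$1 + \<alpha>$2) * cosh \<phi> * sinh \<phi>
                   - (a * \<alpha>$4 + b * \<alpha>$5) * cosh \<phi> - (a * \<alpha>$5 + b * \<alpha>$4) * sinh \<phi>"
  "act \<phi> a b \<alpha> $ 4 = \<alpha>$4 * cosh \<phi> + \<alpha>$5 * sinh \<phi>"
  "act \<phi> a b \<alpha> $ 5 = \<alpha>$4 * sinh \<phi> + \<alpha>$5 * cosh \<phi>"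
  by (simp_all add: act_def)

lemma is_invariant_inv1: "is_invariant inv1"
  unfolding is_invariant_def
proof (intro allI)
  fix \<phi> a b :: real and \<alpha> :: "real^5"
  have "inv1 (act \<phi> a b \<alpha>) = (cosh \<phi> ^ 2 - sinh \<phi> ^ 2) * inv1 \<alpha>"
    unfolding inv1_def act_nth by algebra
  then show "inv1 (act \<phi> a b \<alpha>) = inv1 \<alpha>" by (simp add: cosh_square_eq)
qed

lemma is_invariant_inv2: "is_invariant inv2"
  unfolding is_invariant_def
proof (intro allI)
  fix \<phi> a b :: real and \<alpha> :: "real^5"
  have "inv2 (act \<phi> a b \<alpha>) = (cosh \<phi> ^ 2 - sinh \<phi> ^ 2) ^ 2 * inv2 \<alpha>"
    unfolding inv2_def act_nth by algebra
  then show "inv2 (act \<phi> a b \<alpha>) = inv2 \<alpha>" by (simp add: cosh_square_eq)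
qed

lemma act_boost_null_coordinate:
  assumes "e\<^sup>2 = 1"
  shows "act \<phi> 0 0 \<alpha> $ 4 + e * act \<phi> 0 0 \<alpha> $ 5 = exp (e * \<phi>) * (\<alpha>$4 + e * \<alpha>$5)"
proof -
  have "e = 1 \<or> e = -1"
    using assms by (simp add: power2_eq_1_iff)
  then have exp_eq: "cosh \<phi> + e * sinh \<phi> = exp (e * \<phi>)"
    by (auto simp: cosh_plus_sinh cosh_minus_sinh exp_minus)
  have "act \<phi> 0 0 \<alpha> $ 4 + e * act \<phi> 0 0 \<alpha> $ 5 = (cosh \<phi> + e * sinh \<phi>) * (\<alpha>$4 + e * \<alpha>$5)"
    unfolding act_nth using assms by algebra
  then show ?thesis
    by (simp add: exp_eq)
qed

lemma translation_transitive_on_inv2_level: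
  assumes "\<beta>$4 = \<alpha>$4" "\<beta>$5 = \<alpha>$5" "inv2 \<beta> = inv2 \<alpha>" "\<alpha>$4 \<noteq> 0 \<or> \<alpha>$5 \<noteq> 0"
  shows "\<exists>a b. act 0 a b \<alpha> = \<beta>"
proof -
  consider "\<alpha>$4 \<noteq> 0" "\<alpha>$5 \<noteq> 0" | "\<alpha>$4 = 0" "\<alpha>$5 \<noteq> 0" | "\<alpha>$4 \<noteq> 0" "\<alpha>$5 = 0"
    using assms(4) by blast
  then show ?thesis
  proof cases
    case 1
    have "act 0 ((\<alpha>$2 - \<beta>$2) / (2 * \<alpha>$5)) ((\<alpha>$1 - \<beta>$1) / (2 * \<alpha>$4)) \<alpha> = \<beta>"
      using 1 assms(1-3) unfolding vec_eq_iff forall_5 act_nth inv2_def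
      by (simp add: field_simps power2_eq_square)
    then show ?thesis by blast
  next
    case 2
    have "act 0 ((\<alpha>$2 - \<beta>$2) / (2 * \<alpha>$5)) ((\<alpha>$3 - \<beta>$3) / \<alpha>$5) \<alpha> = \<beta>"
      using 2 assms(1-3) unfolding vec_eq_iff forall_5 act_nth inv2_def
      by (simp add: field_simps power2_eq_square)
    then show ?thesis by blast
  next
    case 3
    have "act 0 ((\<alpha>$3 - \<beta>$3) / \<alpha>$4) ((\<alpha>$1 - \<beta>$1) / (2 * \<alpha>$4)) \<alpha> = \<beta>"
      using 3 assms(1-3) unfolding vec_eq_iff forall_5 act_nth inv2_def
      by (simp add: field_simps power2_eq_square)
    then show ?thesis by blast
  qed
qed

(* Normalised by alpha4 + e alpha5 = w and (alpha1, alpha2, alpha3) proportional to (-1, -1, e). *)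
definition orbit_rep :: "real \<Rightarrow> real \<Rightarrow> real \<times> real \<Rightarrow> real^5" where
  "orbit_rep e w z = (\<chi> i.
     if i = 1 \<or> i = 2 then - snd z / w\<^sup>2
     else if i = 3 then e * snd z / w\<^sup>2
     else if i = 4 then (w + fst z / w) / 2
     else e * (w - fst z / w) / 2)"

lemma orbit_rep_nth:
  "orbit_rep e w z $ 1 = - snd z / w\<^sup>2" "orbit_rep e w z $ 2 = - snd z / w\<^sup>2"
  "orbit_rep e w z $ 3 = e * snd z / w\<^sup>2" "orbit_rep e w z $ 4 = (w + fst z / w) / 2"
  "orbit_rep e w z $ 5 = e * (w - fst z / w) / 2"
  by (simp_all add: orbit_rep_def)

lemma orbit_rep_affine:
  "orbit_rep e w z = (\<chi> i. if i = 4 then w / 2 else if i = 5 then e * w / 2 else 0)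
     + fst z *\<^sub>R (\<chi> i. if i = 4 then 1 / (2 * w) else if i = 5 then - e / (2 * w) else 0)
     + snd z *\<^sub>R (\<chi> i. if i = 1 \<or> i = 2 then - 1 / w\<^sup>2 else if i = 3 then e / w\<^sup>2 else 0)"
  by (simp add: vec_eq_iff forall_5 orbit_rep_nth field_simps)

lemma inv1_orbit_rep:
  assumes "e\<^sup>2 = 1" "w \<noteq> 0"
  shows "inv1 (orbit_rep e w z) = fst z"
  using assms by (simp add: inv1_def orbit_rep_nth field_simps power2_eq_square) algebra

lemma inv2_orbit_rep:
  assumes "e\<^sup>2 = 1" "w \<noteq> 0"
  shows "inv2 (orbit_rep e w z) = snd z"
  using assms by (simp add: inv2_def orbit_rep_nth field_simps power2_eq_square) algebra

lemma null_coordinate_orbit_rep: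
  assumes "e\<^sup>2 = 1" "w \<noteq> 0"
  shows "orbit_rep e w z $ 4 + e * orbit_rep e w z $ 5 = w"
  using assms by (simp add: orbit_rep_nth field_simps power2_eq_square) algebra

lemma orbit_rep_nth_eq:
  assumes "e\<^sup>2 = 1" "w \<noteq> 0" "\<alpha>$4 + e * \<alpha>$5 = w"
  shows "orbit_rep e w (inv1 \<alpha>, inv2 \<alpha>) $ 4 = \<alpha>$4"
    and "orbit_rep e w (inv1 \<alpha>, inv2 \<alpha>) $ 5 = \<alpha>$5"
proof -
  have "w * (\<alpha>$4 - e * \<alpha>$5) = inv1 \<alpha>"
    using assms(1,3) unfolding inv1_def by algebra
  then have "inv1 \<alpha> / w = \<alpha>$4 - e * \<alpha>$5"
    using assms(2) by (simp add: field_simps)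
  then show "orbit_rep e w (inv1 \<alpha>, inv2 \<alpha>) $ 4 = \<alpha>$4"
    and "orbit_rep e w (inv1 \<alpha>, inv2 \<alpha>) $ 5 = \<alpha>$5"
    using assms(1,3) by (simp_all add: orbit_rep_nth) algebra+
qed

definition null_half_space :: "real \<Rightarrow> real \<Rightarrow> (real^5) set" where
  "null_half_space e w = {\<alpha>. (\<alpha>$4 + e * \<alpha>$5) * w > 0}"

lemma open_null_half_space: "open (null_half_space e w)"
  unfolding null_half_space_def by (intro open_Collect_less continuous_intros)

lemma orbit_rep_in_null_half_space:
  assumes "e\<^sup>2 = 1" "w \<noteq> 0"
  shows "orbit_rep e w z \<in> null_half_space e w"
  using assms null_coordinate_orbit_rep[OF assms]
  by (auto simp: null_half_space_def zero_less_mult_iff)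

lemma invariant_eq_at_orbit_rep:
  assumes "is_invariant I" "e\<^sup>2 = 1" "\<alpha> \<in> null_half_space e w"
  shows "I \<alpha> = I (orbit_rep e w (inv1 \<alpha>, inv2 \<alpha>))"
proof -
  define u where "u = \<alpha>$4 + e * \<alpha>$5"
  have w: "w \<noteq> 0" and u: "u \<noteq> 0" and pos: "w / u > 0"
    using assms(3) by (auto simp: null_half_space_def u_def zero_less_mult_iff zero_less_divide_iff)
  define \<beta> where "\<beta> = act (e * ln (w / u)) 0 0 \<alpha>"
  have "\<beta>$4 + e * \<beta>$5 = exp (e\<^sup>2 * ln (w / u)) * u"
    unfolding \<beta>_def act_boost_null_coordinate[OF assms(2)] u_def
    by (simp add: power2_eq_square mult.assoc)
  also have "\<dots> = w"
    using assms(2) pos u by simp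
  finally have \<beta>_null: "\<beta>$4 + e * \<beta>$5 = w" .
  have inv_\<beta>: "inv1 \<beta> = inv1 \<alpha>" "inv2 \<beta> = inv2 \<alpha>"
    using is_invariant_inv1 is_invariant_inv2 unfolding is_invariant_def \<beta>_def by auto
  define \<sigma> where "\<sigma> = orbit_rep e w (inv1 \<alpha>, inv2 \<alpha>)"
  have "\<sigma>$4 = \<beta>$4" "\<sigma>$5 = \<beta>$5"
    using orbit_rep_nth_eq[OF assms(2) w \<beta>_null] unfolding \<sigma>_def inv_\<beta> .
  moreover have "inv2 \<sigma> = inv2 \<beta>"
    using inv2_orbit_rep[OF assms(2) w] by (simp add: \<sigma>_def inv_\<beta>)
  moreover have "\<beta>$4 \<noteq> 0 \<or> \<beta>$5 \<noteq> 0"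
    using \<beta>_null w by auto
  ultimately obtain a b where "act 0 a b \<beta> = \<sigma>"
    using translation_transitive_on_inv2_level by blast
  then have "I \<sigma> = I \<beta>"
    using assms(1) by (auto simp: is_invariant_def)
  also have "I \<beta> = I \<alpha>"
    using assms(1) by (simp add: is_invariant_def \<beta>_def)
  finally show ?thesis by (simp add: \<sigma>_def)
qed

lemma orbit_dim_eq_dim_range_derivative:
  assumes "((\<lambda>g. act (fst g) (fst (snd g)) (snd (snd g)) p) has_derivative D) (at (0, 0, 0))"
  shows "orbit_dim p = dim (range D)"
  unfolding orbit_dim_def using has_derivative_unique[OF assms] assms by blast

lemma orbit_dim_le_1_if_alpha45_zero:
  assumes "p$4 = 0" "p$5 = 0"
  shows "orbit_dim p \<le> 1"
proof -
  define v :: "real^5" where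
    "v = (\<chi> i. if i = 1 \<or> i = 2 then 2 * p$3 else if i = 3 then p$1 + p$2 else 0)"
  define V :: "real^5" where
    "V = (\<chi> i. if i = 1 \<or> i = 2 then p$1 + p$2 else if i = 3 then 2 * p$3 else 0)"
  define h where "h = (\<lambda>\<phi>. act \<phi> 0 0 p)"
  have h_eq: "h = (\<lambda>\<phi>. p + (sinh \<phi>)\<^sup>2 *\<^sub>R V + (cosh \<phi> * sinh \<phi>) *\<^sub>R v)"
    using assms
    by (simp add: fun_eq_iff h_def vec_eq_iff forall_5 act_nth v_def V_def cosh_square_eq algebra_simps)
  have h_deriv: "(h has_vector_derivative v) (at 0)"
    unfolding h_eq by (auto intro!: derivative_eq_intros)
  have "((\<lambda>g. act (fst g) (fst (snd g)) (snd (snd g)) p) has_derivative (\<lambda>g. fst g *\<^sub>R v)) (at (0, 0, 0))"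
  proof -
    have translations_trivial: "(\<lambda>g. act (fst g) (fst (snd g)) (snd (snd g)) p) = h \<circ> fst"
      using assms by (simp add: fun_eq_iff h_def vec_eq_iff forall_5 act_nth)
    moreover have "(h \<circ> fst has_derivative (\<lambda>t. t *\<^sub>R v) \<circ> fst) (at ((0::real), (0::real, 0::real)))"
      by (rule diff_chain_at[OF has_derivative_fst[OF has_derivative_ident]])
         (use h_deriv in \<open>simp add: has_vector_derivative_def\<close>)
    ultimately show ?thesis by (simp add: o_def)
  qed
  then have "orbit_dim p = dim (range (\<lambda>g::real \<times> real \<times> real. fst g *\<^sub>R v))"
    by (rule orbit_dim_eq_dim_range_derivative)
  also have "\<dots> \<le> card {v}"
    by (rule dim_le_card) (auto simp: span_singleton)
  finally show ?thesis by simp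
qed

theorem lemma4p1:
  fixes I :: "real^5 \<Rightarrow> real" and p :: "real^5"
  assumes "poly_fun I" and "is_invariant I" and "orbit_dim p = 3"
  shows "\<exists>U W F. open U \<and> p \<in> U \<and> open W \<and> (\<lambda>\<alpha>. (inv1 \<alpha>, inv2 \<alpha>)) ` U = W
           \<and> real_analytic_on2 F W
           \<and> (\<forall>\<alpha>\<in>U. I \<alpha> = F (inv1 \<alpha>, inv2 \<alpha>))
           \<and> (\<forall>G. (\<forall>\<alpha>\<in>U. I \<alpha> = G (inv1 \<alpha>, inv2 \<alpha>)) \<longrightarrow> (\<forall>w\<in>W. G w = F w))"
proof -
  have "p$4 \<noteq> 0 \<or> p$5 \<noteq> 0"
    using orbit_dim_le_1_if_alpha45_zero assms(3) by fastforce
  then obtain e :: real where e: "e\<^sup>2 = 1" and "p$4 + e * p$5 \<noteq> 0"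
  proof (cases "p$4 + p$5 = 0")
    case True
    with \<open>p$4 \<noteq> 0 \<or> p$5 \<noteq> 0\<close> show ?thesis by (intro that[of "-1"]) auto
  qed (intro that[of 1], auto)
  moreover define w where "w = p$4 + e * p$5"
  ultimately have w: "w \<noteq> 0" by simp
  define U where "U = null_half_space e w"
  define F where "F = (\<lambda>z. I (orbit_rep e w z))"
  have rep_U: "orbit_rep e w z \<in> U" for z
    using orbit_rep_in_null_half_space[OF e w] by (simp add: U_def)
  have inv_rep: "(inv1 (orbit_rep e w z), inv2 (orbit_rep e w z)) = z" for z
    using inv1_orbit_rep[OF e w] inv2_orbit_rep[OF e w] by simp
  have "open U"
    by (simp add: U_def open_null_half_space)
  moreover have "p \<in> U"
    using w by (auto simp: U_def null_half_space_def w_def zero_less_mult_iff)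
  moreover have "(\<lambda>\<alpha>. (inv1 \<alpha>, inv2 \<alpha>)) ` U = UNIV"
  proof -
    have "z \<in> (\<lambda>\<alpha>. (inv1 \<alpha>, inv2 \<alpha>)) ` U" for z
      using rep_U[of z] inv_rep[of z] by force
    then show ?thesis by blast
  qed
  moreover have "real_analytic_on2 F UNIV"
    unfolding F_def orbit_rep_affine by (rule real_analytic_on2_poly_fun_affine_plane[OF assms(1)])
  moreover have "\<forall>\<alpha>\<in>U. I \<alpha> = F (inv1 \<alpha>, inv2 \<alpha>)"
    using invariant_eq_at_orbit_rep[OF assms(2) e] by (simp add: U_def F_def)
  moreover have "\<forall>G. (\<forall>\<alpha>\<in>U. I \<alpha> = G (inv1 \<alpha>, inv2 \<alpha>)) \<longrightarrow> (\<forall>z\<in>UNIV. G z = F z)"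
    using rep_U inv_rep by (auto simp: F_def)
  ultimately show ?thesis
    by blast
qed

end
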